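(* Let $\mathcal G$ be an MMPG arena, let $(\sigma,\gamma)$ be an incentive strategy profile, and let $Q$ be the set of vertices occurring on $\pi_\sigma$. Then for every follower $p\in P\setminus\{l\}$ and every vertex $v\in Q\cap V_p$ we have $\gamma_p(\sigma)+r_p(\sigma)\ge \mathrm{val}_p(v)$.
   Context: A multi-player mean-payoff game (MMPG) arena is a tuple $\mathcal G=(P,V,(V_p)_{p\in P},v_0,E,(r_p)_{p\in P})$ where $P$ is a finite set of players containing a distinguished leader $l\in P$ (the other players are called followers), $V$ is a finite set of vertices with initial vertex $v_0\in V$, $(V_p)_{p\in P}$ is a partition of $V$ (player $p$ owns $V_p$), $E\subseteq V\times V$ is an edge set such that every vertex has at least one successor, and $r_p:E\to\mathbb Q$ is the reward function of player $p$. A history is a finite sequence $h=v_0v_1\dots v_n$ starting at $v_0$ with $(v_i,v_{i+1})\in E$ for all $i<n$; $\mathsf{last}(h)=v_n$. A play is an infinite such sequence. A strategy of player $p$ is a function $\sigma_p$ assigning to every history $h$ with $\mathsf{last}(h)\in V_p$ a vertex $v$ with $(\mathsf{last}(h),v)\in E$. A strategy profile $\sigma=(\sigma_p)_{p\in P}$ determines a unique play $\pi_\sigma$. The raw payoff of player $p$ on a play $\pi=v_0v_1\dots$ is $r_p(\pi)=\liminf_{n\to\infty}\frac1n\sum_{i=0}^{n-1}r_p((v_i,v_{i+1}))$, and $r_p(\sigma):=r_p(\pi_\sigma)$. For a profile $\sigma$, a player $p$ and a strategy $\sigma'$ of $p$, $\sigma_{p,\sigma'}$ denotes the profile obtained from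 $\sigma$ by replacing $p$'s strategy with $\sigma'$. An incentive for a follower $p$ is a function $\gamma_p$ from histories to $\mathbb R_{\ge 0}$; its value on a play $\pi=v_0v_1\dots$ is $\gamma_p(\pi)=\liminf_{n\to\infty}\frac1n\sum_{i=1}^{n}\gamma_p(v_0\dots v_i)$, and $\gamma_p(\sigma):=\gamma_p(\pi_\sigma)$. An incentive profile is $\gamma=(\gamma_p)_{p\in P\setminus\{l\}}$. A pair $(\sigma,\gamma)$ is an incentive strategy profile (ISP) if for every follower $p$ and every strategy $\sigma'$ of $p$: $r_p(\sigma)+\gamma_p(\sigma)\ge r_p(\sigma_{p,\sigma'})+\gamma_p(\sigma_{p,\sigma'})$. For a follower $p$, $\mathcal G_p$ is the two-player zero-sum mean-payoff game on the graph $(V,E)$ from any start vertex, in which player $p$ controls $V_p$ and maximises the liminf-average of $r_p$, while a coalition of all other players (including the leader) controls $V\setminus V_p$ and minimises it. Such games are determined with optimal memoryless strategies for both sides; $\mathrm{val}_p(v)$ denotes the value of $\mathcal G_p$ from vertex $v$. *)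

theory Defs
  imports Complex_Main "HOL-Library.Extended_Real" "HOL-Library.Liminf_Limsup"
begin

text \<open>Arena: players P with leader l, vertices V, owner function (encoding the
partition (V_p)), initial vertex v0, edges E, rewards r p : E -> Q.\<close>

definition mmpg :: "'p set \<Rightarrow> 'p \<Rightarrow> 'v set \<Rightarrow> ('v \<Rightarrow> 'p) \<Rightarrow> 'v \<Rightarrow> ('v \<times> 'v) set
    \<Rightarrow> ('p \<Rightarrow> 'v \<times> 'v \<Rightarrow> rat) \<Rightarrow> bool" where
  "mmpg P l V owner v0 E r \<longleftrightarrow>
     finite P \<and> l \<in> P \<and> finite V \<and> v0 \<in> V \<and> E \<subseteq> V \<times> V \<and>
     (\<forall>v\<in>V. \<exists>w. (v, w) \<in> E) \<and> (\<forall>v\<in>V. owner v \<in> P)"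

definition owned :: "'v set \<Rightarrow> ('v \<Rightarrow> 'p) \<Rightarrow> 'p \<Rightarrow> 'v set" where
  "owned V owner p = {v \<in> V. owner v = p}"

definition is_hist_from :: "('v \<times> 'v) set \<Rightarrow> 'v \<Rightarrow> 'v list \<Rightarrow> bool" where
  "is_hist_from E u h \<longleftrightarrow> h \<noteq> [] \<and> hd h = u \<and>
     (\<forall>i. Suc i < length h \<longrightarrow> (h ! i, h ! Suc i) \<in> E)"

definition is_strategy_from :: "('v \<times> 'v) set \<Rightarrow> 'v \<Rightarrow> 'v set \<Rightarrow> ('v list \<Rightarrow> 'v) \<Rightarrow> bool" where
  "is_strategy_from E u S f \<longleftrightarrow>
     (\<forall>h. is_hist_from E u h \<and> last h \<in> S \<longrightarrow> (last h, f h) \<in> E)"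

text \<open>The history v_0 ... v_n of length n+1 generated by a profile from start u.\<close>
fun hist_from :: "('v \<Rightarrow> 'p) \<Rightarrow> 'v \<Rightarrow> ('p \<Rightarrow> 'v list \<Rightarrow> 'v) \<Rightarrow> nat \<Rightarrow> 'v list" where
  "hist_from owner u \<sigma> 0 = [u]"
| "hist_from owner u \<sigma> (Suc n) =
     (let h = hist_from owner u \<sigma> n in h @ [\<sigma> (owner (last h)) h])"

definition play_from :: "('v \<Rightarrow> 'p) \<Rightarrow> 'v \<Rightarrow> ('p \<Rightarrow> 'v list \<Rightarrow> 'v) \<Rightarrow> nat \<Rightarrow> 'v" where
  "play_from owner u \<sigma> n = last (hist_from owner u \<sigma> n)"

definition mean_payoff :: "('v \<times> 'v \<Rightarrow> rat) \<Rightarrow> (nat \<Rightarrow> 'v) \<Rightarrow> ereal" where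
  "mean_payoff w x =
     liminf (\<lambda>n. ereal ((\<Sum>i<n. real_of_rat (w (x i, x (Suc i)))) / real n))"

text \<open>Value of an incentive along the play whose prefixes v_0...v_i are hs i.\<close>
definition incentive_value :: "('v list \<Rightarrow> real) \<Rightarrow> (nat \<Rightarrow> 'v list) \<Rightarrow> ereal" where
  "incentive_value g hs = liminf (\<lambda>n. ereal ((\<Sum>i\<in>{1..n}. g (hs i)) / real n))"

definition is_profile :: "'p set \<Rightarrow> 'v set \<Rightarrow> ('v \<Rightarrow> 'p) \<Rightarrow> 'v \<Rightarrow> ('v \<times> 'v) set
    \<Rightarrow> ('p \<Rightarrow> 'v list \<Rightarrow> 'v) \<Rightarrow> bool" where
  "is_profile P V owner v0 E \<sigma> \<longleftrightarrow>
     (\<forall>q\<in>P. is_strategy_from E v0 (owned V owner q) (\<sigma> q))"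

definition raw_payoff where
  "raw_payoff owner v0 r p \<sigma> = mean_payoff (r p) (play_from owner v0 \<sigma>)"

definition inc_payoff where
  "inc_payoff owner v0 \<gamma> p \<sigma> = incentive_value (\<gamma> p) (hist_from owner v0 \<sigma>)"

definition is_ISP :: "'p set \<Rightarrow> 'p \<Rightarrow> 'v set \<Rightarrow> ('v \<Rightarrow> 'p) \<Rightarrow> 'v \<Rightarrow> ('v \<times> 'v) set
    \<Rightarrow> ('p \<Rightarrow> 'v \<times> 'v \<Rightarrow> rat) \<Rightarrow> ('p \<Rightarrow> 'v list \<Rightarrow> 'v) \<Rightarrow> ('p \<Rightarrow> 'v list \<Rightarrow> real) \<Rightarrow> bool" where
  "is_ISP P l V owner v0 E r \<sigma> \<gamma> \<longleftrightarrow>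
     is_profile P V owner v0 E \<sigma> \<and>
     (\<forall>p\<in>P - {l}. \<forall>h. is_hist_from E v0 h \<longrightarrow> \<gamma> p h \<ge> 0) \<and>
     (\<forall>p\<in>P - {l}. \<forall>\<sigma>'. is_strategy_from E v0 (owned V owner p) \<sigma>' \<longrightarrow>
        raw_payoff owner v0 r p \<sigma> + inc_payoff owner v0 \<gamma> p \<sigma>
        \<ge> raw_payoff owner v0 r p (\<sigma>(p := \<sigma>')) + inc_payoff owner v0 \<gamma> p (\<sigma>(p := \<sigma>')))"

text \<open>Value of the zero-sum game G_p from v: what p can guarantee
  (sup over p's strategies of inf over coalition strategies); the game is determined.\<close>
definition val :: "'v set \<Rightarrow> ('v \<Rightarrow> 'p) \<Rightarrow> ('v \<times> 'v) set \<Rightarrow> ('p \<Rightarrow> 'v \<times> 'v \<Rightarrow> rat)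
    \<Rightarrow> 'p \<Rightarrow> 'v \<Rightarrow> ereal" where
  "val V owner E r p v =
     (SUP \<tau>\<in>{\<tau>. is_strategy_from E v (owned V owner p) \<tau>}.
        INF \<rho>\<in>{\<rho>. is_strategy_from E v (V - owned V owner p) \<rho>}.
          mean_payoff (r p) (play_from owner v (\<lambda>q. if q = p then \<tau> else \<rho>)))"

end

theory Submission
  imports Defs "HOL-Analysis.Extended_Real_Limits"
begin

text \<open>Let the play of \<open>\<sigma>\<close> visit \<open>v\<close> after the history \<open>pre @ [v]\<close>, and let \<open>\<tau>\<close> be any
  strategy of \<open>p\<close> from \<open>v\<close>. Player \<open>p\<close> may deviate by following \<open>\<sigma>\<close> up to \<open>v\<close> and \<open>\<tau>\<close>
  afterwards. From \<open>v\<close> on, the other players keep playing \<open>\<sigma>\<close>, which is one particular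
  coalition strategy in \<open>\<G>\<^sub>p\<close>; and a mean payoff ignores finite prefixes. Hence the raw payoff
  of the deviation is at least what \<open>\<tau>\<close> guarantees against every coalition, and since
  incentives are nonnegative, the ISP condition bounds it by \<open>r\<^sub>p(\<sigma>) + \<gamma>\<^sub>p(\<sigma>)\<close>.
  Taking the supremum over \<open>\<tau>\<close> gives \<open>val\<^sub>p(v)\<close>.\<close>

lemma average_shift_diff_tendsto_0:
  fixes a b :: "nat \<Rightarrow> real"
  assumes shift: "\<And>n. a (n + k) = b n" and bounded: "\<And>n. \<bar>b n\<bar> \<le> M"
  shows "(\<lambda>n. (\<Sum>i<n + k. a i) / real (n + k) - (\<Sum>i<n. b i) / real n) \<longlonglongrightarrow> 0"
proof -
  define S where "S = (\<Sum>i<k. a i)"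
  have sum_a: "(\<Sum>i<n + k. a i) = S + (\<Sum>i<n. b i)" for n
    by (induction n) (simp_all add: S_def shift add.commute)
  have sum_b: "\<bar>\<Sum>i<n. b i\<bar> \<le> M * n" for n
    using order_trans[OF sum_abs sum_bounded_above[of "{..<n}" "\<lambda>i. \<bar>b i\<bar>" M]] bounded
    by (simp add: mult.commute)
  have "M \<ge> 0"
    using bounded[of 0] by linarith
  have bound: "\<bar>(\<Sum>i<n + k. a i) / real (n + k) - (\<Sum>i<n. b i) / real n\<bar>
      \<le> (\<bar>S\<bar> + real k * M) / real (n + k)" for n
  proof (cases "n = 0")
    case True
    then show ?thesis using \<open>M \<ge> 0\<close> by (simp add: S_def divide_right_mono abs_divide)
  next
    case False
    let ?T = "\<Sum>i<n. b i"
    have "(\<Sum>i<n + k. a i) / real (n + k) - ?T / real n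
        = S / real (n + k) - k * (?T / real n) / real (n + k)"
      unfolding sum_a using False by (simp add: divide_simps) (simp add: algebra_simps)
    also have "\<bar>\<dots>\<bar> \<le> \<bar>S\<bar> / real (n + k) + k * \<bar>?T / real n\<bar> / real (n + k)"
      using abs_triangle_ineq4[of "S / real (n + k)" "real k * (?T / real n) / real (n + k)"]
      by (simp add: abs_divide abs_mult)
    also have "\<dots> \<le> (\<bar>S\<bar> + real k * M) / real (n + k)"
    proof -
      have "\<bar>?T / real n\<bar> \<le> M"
        using pos_divide_le_eq[THEN iffD2, OF _ sum_b[of n]] False by (simp add: abs_divide)
      then show ?thesis
        unfolding add_divide_distrib by (intro add_left_mono divide_right_mono mult_left_mono) auto
    qed
    finally show ?thesis .
  qed
  have "(\<lambda>n. (\<bar>S\<bar> + real k * M) / real (n + k)) \<longlonglongrightarrow> 0"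
    by (rule LIMSEQ_ignore_initial_segment[OF lim_const_over_n])
  then show ?thesis
    by (rule tendsto_0_le[where K = 1]) (use bound \<open>M \<ge> 0\<close> in simp)
qed

lemma liminf_average_shift:
  fixes a b :: "nat \<Rightarrow> real"
  assumes shift: "\<And>n. a (n + k) = b n" and bounded: "\<And>n. \<bar>b n\<bar> \<le> M"
  shows "liminf (\<lambda>n. ereal ((\<Sum>i<n. b i) / real n)) = liminf (\<lambda>n. ereal ((\<Sum>i<n. a i) / real n))"
proof -
  define diff where "diff n = (\<Sum>i<n + k. a i) / real (n + k) - (\<Sum>i<n. b i) / real n" for n
  have "(\<lambda>n. ereal (diff n)) \<longlonglongrightarrow> 0"
    using average_shift_diff_tendsto_0[of a k b M, OF shift bounded]
    by (simp add: diff_def zero_ereal_def tendsto_ereal)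
  then have "liminf (\<lambda>n. ereal (diff n) + ereal ((\<Sum>i<n. b i) / real n))
      = liminf (\<lambda>n. ereal ((\<Sum>i<n. b i) / real n))"
    using ereal_liminf_lim_add[of "\<lambda>n. ereal (diff n)" 0] by (simp del: plus_ereal.simps)
  also have "liminf (\<lambda>n. ereal (diff n) + ereal ((\<Sum>i<n. b i) / real n))
      = liminf (\<lambda>n. ereal ((\<Sum>i<n + k. a i) / real (n + k)))"
    by (simp add: diff_def)
  also have "\<dots> = liminf (\<lambda>n. ereal ((\<Sum>i<n. a i) / real n))"
    by (rule liminf_shift_k[where u = "\<lambda>n. ereal ((\<Sum>i<n. a i) / real n)"])
  finally show ?thesis by simp
qed

lemma length_hist_from [simp]: "length (hist_from owner u \<sigma> n) = Suc n"
  by (induction n) (simp_all add: Let_def)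

lemma hist_from_not_Nil [simp]: "hist_from owner u \<sigma> n \<noteq> []"
  by (metis length_hist_from list.size(3) nat.distinct(1))

lemma hd_hist_from [simp]: "hd (hist_from owner u \<sigma> n) = u"
  by (induction n) (simp_all add: Let_def)

lemma is_hist_from_iff_successively:
  "is_hist_from E u h \<longleftrightarrow> h \<noteq> [] \<and> hd h = u \<and> successively (\<lambda>x y. (x, y) \<in> E) h"
  unfolding is_hist_from_def successively_conv_nth by auto

lemma is_hist_from_append:
  assumes "is_hist_from E u (pre @ [v])" and "is_hist_from E v h"
  shows "is_hist_from E u (pre @ h)"
  using assms
  by (auto simp: is_hist_from_iff_successively successively_append_iff hd_append split: if_splits)

lemma is_hist_from_drop:
  assumes "is_hist_from E u h" and "k < length h"
  shows "is_hist_from E (h ! k) (drop k h)"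
  using assms unfolding is_hist_from_iff_successively
  by (metis append_take_drop_id drop_eq_Nil hd_drop_conv_nth not_le successively_append_iff)

lemma last_in_of_is_hist_from:
  assumes "is_hist_from E u h" and "u \<in> V" and "E \<subseteq> V \<times> V"
  shows "last h \<in> V"
proof (cases "length h = 1")
  case True
  then show ?thesis
    using assms(1,2) unfolding is_hist_from_def by (metis last_conv_nth hd_conv_nth diff_self_eq_0)
next
  case False
  then obtain i where "length h = Suc (Suc i)"
    using assms(1) unfolding is_hist_from_def by (metis One_nat_def length_0_conv not0_implies_Suc)
  then show ?thesis
    using assms(1,3) unfolding is_hist_from_def
    by (metis diff_Suc_1 last_conv_nth lessI list.size(3) nat.distinct(1) mem_Sigma_iff subsetD)
qed

lemma is_hist_from_hist_from:
  assumes "\<And>h. is_hist_from E u h \<Longrightarrow> (last h, \<sigma> (owner (last h)) h) \<in> E"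
  shows "is_hist_from E u (hist_from owner u \<sigma> n)"
proof (induction n)
  case 0
  then show ?case by (simp add: is_hist_from_def)
next
  case (Suc n)
  then show ?case
    using assms[OF Suc] by (auto simp: Let_def is_hist_from_iff_successively successively_append_iff)
qed

lemma play_from_edge:
  assumes "\<And>h. is_hist_from E u h \<Longrightarrow> (last h, \<sigma> (owner (last h)) h) \<in> E"
  shows "(play_from owner u \<sigma> n, play_from owner u \<sigma> (Suc n)) \<in> E"
  using assms[OF is_hist_from_hist_from[of E u \<sigma> owner, OF assms]]
  by (simp add: play_from_def Let_def)

lemma hist_from_cong:
  assumes "\<And>h. length h \<le> k \<Longrightarrow> \<sigma> (owner (last h)) h = \<sigma>' (owner (last h)) h" and "n \<le> k"
  shows "hist_from owner u \<sigma> n = hist_from owner u \<sigma>' n"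
  using assms(2) by (induction n) (simp_all add: Let_def assms(1))

lemma hist_from_splice:
  assumes "hist_from owner u \<sigma> k = pre @ [v]"
    and "\<And>h. h \<noteq> [] \<Longrightarrow> hd h = v \<Longrightarrow> \<sigma> (owner (last h)) (pre @ h) = \<sigma>' (owner (last h)) h"
  shows "hist_from owner u \<sigma> (k + n) = pre @ hist_from owner v \<sigma>' n"
proof (induction n)
  case 0
  then show ?case using assms(1) by simp
next
  case (Suc n)
  then show ?case
    using assms(2)[of "hist_from owner v \<sigma>' n"] by (simp add: Let_def)
qed

lemma play_from_splice:
  assumes "hist_from owner u \<sigma> k = pre @ [v]"
    and "\<And>h. h \<noteq> [] \<Longrightarrow> hd h = v \<Longrightarrow> \<sigma> (owner (last h)) (pre @ h) = \<sigma>' (owner (last h)) h"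
  shows "play_from owner u \<sigma> (n + k) = play_from owner v \<sigma>' n"
  using hist_from_splice[of owner u \<sigma> k pre v \<sigma>', OF assms, of n]
  by (simp add: play_from_def add.commute)

lemma mean_payoff_shift:
  assumes "\<And>n. (x n, x (Suc n)) \<in> E" and "finite E" and "\<And>n. x (n + k) = y n"
  shows "mean_payoff w y = mean_payoff w x"
proof -
  define M where "M = Max ((\<lambda>e. \<bar>real_of_rat (w e)\<bar>) ` E)"
  have "(y n, y (Suc n)) \<in> E" for n
    using assms(1)[of "n + k"] assms(3)[of n] assms(3)[of "Suc n"] by simp
  then have "\<bar>real_of_rat (w (y n, y (Suc n)))\<bar> \<le> M" for n
    unfolding M_def using assms(2) by (intro Max_ge) auto
  then show ?thesis
    unfolding mean_payoff_def
    using assms(3) by (intro liminf_average_shift[where k = k]) (metis add_Suc)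
qed

lemma incentive_value_nonneg:
  assumes "\<And>i. g (hs i) \<ge> 0"
  shows "incentive_value g hs \<ge> 0"
  unfolding incentive_value_def
  by (intro Liminf_bounded always_eventually allI) (simp add: assms sum_nonneg)

lemma profile_move_in_edges:
  assumes "mmpg P l V owner v0 E r" and "is_profile P V owner v0 E \<sigma>"
    and "is_hist_from E v0 h"
  shows "(last h, \<sigma> (owner (last h)) h) \<in> E"
proof -
  have "v0 \<in> V" and "E \<subseteq> V \<times> V"
    using assms(1) unfolding mmpg_def by auto
  then have "last h \<in> V"
    using assms(3) by (rule last_in_of_is_hist_from[rotated])
  then show ?thesis
    using assms unfolding mmpg_def is_profile_def is_strategy_from_def owned_def by blast
qed

lemma is_profile_fun_upd:
  assumes "is_profile P V owner v0 E \<sigma>" and "is_strategy_from E v0 (owned V owner p) \<sigma>'"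
  shows "is_profile P V owner v0 E (\<sigma>(p := \<sigma>'))"
  using assms unfolding is_profile_def by simp

definition deviate :: "'v list \<Rightarrow> 'v \<Rightarrow> ('v list \<Rightarrow> 'v) \<Rightarrow> ('v list \<Rightarrow> 'v) \<Rightarrow> 'v list \<Rightarrow> 'v" where
  "deviate pre v \<tau> s h =
     (if take (Suc (length pre)) h = pre @ [v] then \<tau> (drop (length pre) h) else s h)"

text \<open>The coalition strategy from \<open>v\<close> that lets every player go on playing the profile \<open>\<sigma>\<close>
  as if the history \<open>pre\<close> had been played before.\<close>

definition resume :: "('v \<Rightarrow> 'p) \<Rightarrow> ('p \<Rightarrow> 'v list \<Rightarrow> 'v) \<Rightarrow> 'v list \<Rightarrow> 'v list \<Rightarrow> 'v" where
  "resume owner \<sigma> pre h = \<sigma> (owner (last h)) (pre @ h)"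

lemma is_strategy_from_deviate:
  assumes "is_strategy_from E u S s" and "is_strategy_from E v S \<tau>"
  shows "is_strategy_from E u S (deviate pre v \<tau> s)"
  unfolding is_strategy_from_def
proof (intro allI impI)
  fix h assume h: "is_hist_from E u h \<and> last h \<in> S"
  show "(last h, deviate pre v \<tau> s h) \<in> E"
  proof (cases "take (Suc (length pre)) h = pre @ [v]")
    case True
    have "length pre < length h"
      using arg_cong[OF True, of length] by (simp add: min_def split: if_splits)
    moreover have "h ! length pre = v"
      using arg_cong[OF True, of "\<lambda>xs. xs ! length pre"] by simp
    ultimately have "is_hist_from E v (drop (length pre) h)" and "last (drop (length pre) h) = last h"
      using h is_hist_from_drop[of E u h "length pre"] by (auto simp: last_drop)
    then show ?thesis
      using True h assms(2) unfolding deviate_def is_strategy_from_def by auto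
  next
    case False
    then show ?thesis
      using h assms(1) unfolding deviate_def is_strategy_from_def by auto
  qed
qed

lemma is_strategy_from_resume:
  assumes "is_hist_from E u (pre @ [v])"
    and "\<And>h. is_hist_from E u h \<Longrightarrow> (last h, \<sigma> (owner (last h)) h) \<in> E"
  shows "is_strategy_from E v S (resume owner \<sigma> pre)"
  unfolding is_strategy_from_def resume_def
proof (intro allI impI)
  fix h assume "is_hist_from E v h \<and> last h \<in> S"
  then have "is_hist_from E u (pre @ h)" and "last (pre @ h) = last h"
    using is_hist_from_append[OF assms(1)] by (auto simp: is_hist_from_def)
  then show "(last h, \<sigma> (owner (last h)) (pre @ h)) \<in> E"
    using assms(2)[of "pre @ h"] by simp
qed

lemma play_from_deviate:
  assumes "hist_from owner u \<sigma> k = pre @ [v]"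
  shows "play_from owner u (\<sigma>(p := deviate pre v \<tau> (\<sigma> p))) (n + k)
    = play_from owner v (\<lambda>q. if q = p then \<tau> else resume owner \<sigma> pre) n"
proof (rule play_from_splice)
  have "length pre = k"
    using arg_cong[OF assms, of length] by simp
  then have "deviate pre v \<tau> (\<sigma> p) h = \<sigma> p h" if "length h \<le> k" for h
    using that unfolding deviate_def by (auto dest: arg_cong[of _ _ length])
  then have "hist_from owner u (\<sigma>(p := deviate pre v \<tau> (\<sigma> p))) k = hist_from owner u \<sigma> k"
    by (intro hist_from_cong[where k = k]) auto
  then show "hist_from owner u (\<sigma>(p := deviate pre v \<tau> (\<sigma> p))) k = pre @ [v]"
    using assms by simp
next
  fix h :: "'a list" assume "h \<noteq> []" and "hd h = v"
  then have "take (Suc (length pre)) (pre @ h) = pre @ [v]"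
    by (cases h) simp_all
  then show "(\<sigma>(p := deviate pre v \<tau> (\<sigma> p))) (owner (last h)) (pre @ h)
    = (\<lambda>q. if q = p then \<tau> else resume owner \<sigma> pre) (owner (last h)) h"
    by (simp add: deviate_def resume_def)
qed


lemma inc_payoff_nonneg:
  assumes "mmpg P l V owner v0 E r" and "is_profile P V owner v0 E \<sigma>"
    and "\<And>h. is_hist_from E v0 h \<Longrightarrow> \<gamma> p h \<ge> 0"
  shows "inc_payoff owner v0 \<gamma> p \<sigma> \<ge> 0"
  unfolding inc_payoff_def
  using assms(3)[OF is_hist_from_hist_from[of E v0 \<sigma> owner, OF profile_move_in_edges[OF assms(1,2)]]]
  by (rule incentive_value_nonneg)

lemma value_against_resume_le_raw_payoff_deviate:
  assumes mmpg: "mmpg P l V owner v0 E r" and prof: "is_profile P V owner v0 E \<sigma>" and "p \<in> P"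
    and hist: "hist_from owner v0 \<sigma> k = pre @ [v]"
    and \<tau>: "is_strategy_from E v (owned V owner p) \<tau>"
  shows "(INF \<rho>\<in>{\<rho>. is_strategy_from E v (V - owned V owner p) \<rho>}.
            mean_payoff (r p) (play_from owner v (\<lambda>q. if q = p then \<tau> else \<rho>)))
         \<le> raw_payoff owner v0 r p (\<sigma>(p := deviate pre v \<tau> (\<sigma> p)))"
proof -
  have "is_hist_from E v0 (pre @ [v])"
    using is_hist_from_hist_from[of E v0 \<sigma> owner, OF profile_move_in_edges[OF mmpg prof], of k] hist
    by simp
  then have "is_strategy_from E v (V - owned V owner p) (resume owner \<sigma> pre)"
    using profile_move_in_edges[OF mmpg prof] by (rule is_strategy_from_resume)
  then have "(INF \<rho>\<in>{\<rho>. is_strategy_from E v (V - owned V owner p) \<rho>}.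
            mean_payoff (r p) (play_from owner v (\<lambda>q. if q = p then \<tau> else \<rho>)))
      \<le> mean_payoff (r p) (play_from owner v (\<lambda>q. if q = p then \<tau> else resume owner \<sigma> pre))"
    by (intro INF_lower) simp
  also have "\<dots> = raw_payoff owner v0 r p (\<sigma>(p := deviate pre v \<tau> (\<sigma> p)))"
    unfolding raw_payoff_def
  proof (rule mean_payoff_shift)
    have "is_strategy_from E v0 (owned V owner p) (\<sigma> p)"
      using prof \<open>p \<in> P\<close> unfolding is_profile_def by blast
    then have "is_profile P V owner v0 E (\<sigma>(p := deviate pre v \<tau> (\<sigma> p)))"
      using prof \<tau> by (intro is_profile_fun_upd is_strategy_from_deviate)
    then show "(play_from owner v0 (\<sigma>(p := deviate pre v \<tau> (\<sigma> p))) n,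
        play_from owner v0 (\<sigma>(p := deviate pre v \<tau> (\<sigma> p))) (Suc n)) \<in> E" for n
      by (intro play_from_edge profile_move_in_edges[OF mmpg])
    show "finite E"
      using mmpg unfolding mmpg_def by (meson finite_SigmaI finite_subset)
    show "play_from owner v0 (\<sigma>(p := deviate pre v \<tau> (\<sigma> p))) (n + k)
        = play_from owner v (\<lambda>q. if q = p then \<tau> else resume owner \<sigma> pre) n" for n
      using hist by (rule play_from_deviate)
  qed
  finally show ?thesis .
qed

theorem lemma2:
  assumes "mmpg P l V owner v0 E r"
    and "is_ISP P l V owner v0 E r \<sigma> \<gamma>"
  shows "\<forall>p\<in>P - {l}. \<forall>v\<in>range (play_from owner v0 \<sigma>) \<inter> owned V owner p.
           inc_payoff owner v0 \<gamma> p \<sigma> + raw_payoff owner v0 r p \<sigma> \<ge> val V owner E r p v"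
proof (intro ballI)
  fix p v assume p: "p \<in> P - {l}" and "v \<in> range (play_from owner v0 \<sigma>) \<inter> owned V owner p"
  then obtain k where "play_from owner v0 \<sigma> k = v" by auto
  then have hist: "hist_from owner v0 \<sigma> k = butlast (hist_from owner v0 \<sigma> k) @ [v]"
    unfolding play_from_def by (metis append_butlast_last_id hist_from_not_Nil)
  have prof: "is_profile P V owner v0 E \<sigma>"
    using assms(2) unfolding is_ISP_def by blast
  show "val V owner E r p v \<le> inc_payoff owner v0 \<gamma> p \<sigma> + raw_payoff owner v0 r p \<sigma>"
    unfolding val_def
  proof (rule SUP_least)
    fix \<tau> assume \<tau>: "\<tau> \<in> {\<tau>. is_strategy_from E v (owned V owner p) \<tau>}"
    moreover define \<sigma>' where "\<sigma>' = deviate (butlast (hist_from owner v0 \<sigma> k)) v \<tau> (\<sigma> p)"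
    ultimately have "is_strategy_from E v0 (owned V owner p) \<sigma>'"
      using prof p unfolding is_profile_def by (auto intro: is_strategy_from_deviate)
    with assms p have inc_nonneg: "0 \<le> inc_payoff owner v0 \<gamma> p (\<sigma>(p := \<sigma>'))"
      and isp: "raw_payoff owner v0 r p (\<sigma>(p := \<sigma>')) + inc_payoff owner v0 \<gamma> p (\<sigma>(p := \<sigma>'))
        \<le> raw_payoff owner v0 r p \<sigma> + inc_payoff owner v0 \<gamma> p \<sigma>"
      unfolding is_ISP_def by (auto intro: inc_payoff_nonneg is_profile_fun_upd)
    have "(INF \<rho>\<in>{\<rho>. is_strategy_from E v (V - owned V owner p) \<rho>}.
            mean_payoff (r p) (play_from owner v (\<lambda>q. if q = p then \<tau> else \<rho>)))
        \<le> raw_payoff owner v0 r p (\<sigma>(p := \<sigma>'))" (is "?inf \<le> _")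
      unfolding \<sigma>'_def using \<tau> p
      by (intro value_against_resume_le_raw_payoff_deviate[OF assms(1) prof _ hist]) simp_all
    also have "\<dots> \<le> raw_payoff owner v0 r p (\<sigma>(p := \<sigma>')) + inc_payoff owner v0 \<gamma> p (\<sigma>(p := \<sigma>'))"
      using inc_nonneg by (rule add_increasing2) simp
    also have "\<dots> \<le> inc_payoff owner v0 \<gamma> p \<sigma> + raw_payoff owner v0 r p \<sigma>"
      using isp by (simp add: add.commute)
    finally show "?inf \<le> inc_payoff owner v0 \<gamma> p \<sigma> + raw_payoff owner v0 r p \<sigma>" .
  qed
qed

end
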